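(* Let $B>0$. Suppose $y(t,x)$ is a solution of $y_{t}+By_{xxxx}=0$ for $x>0$ (or for $x<0$) and $t>0$ which has the self-similar form $y(t,x)=(Bt)^{1/4}Z\big(x/(Bt)^{1/4}\big)$ for some function $Z$. Then there are constants $C_1,C_2,C_3,C_4\in\mathbb{R}$ such that $$y(t,x)=(Bt)^{1/4}\sum_{i=1}^{4}C_{i}\,z_{i}\!\left(\frac{x}{(Bt)^{1/4}}\right),\qquad x>0\ (\text{or } x<0),\ t>0,$$ where $z_{1}(u)={}_{1}F_{3}(-\tfrac{1}{4};\tfrac{1}{4},\tfrac{1}{2},\tfrac{3}{4};\tfrac{u^{4}}{256})$, $z_{2}(u)=u$, $z_{3}(u)=u^{2}\,{}_{1}F_{3}(\tfrac{1}{4};\tfrac{3}{4},\tfrac{5}{4},\tfrac{3}{2};\tfrac{u^{4}}{256})$, $z_{4}(u)=u^{3}\,{}_{1}F_{3}(\tfrac{1}{2};\tfrac{5}{4},\tfrac{3}{2},\tfrac{7}{4};\tfrac{u^{4}}{256})$.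
   Context: ${}_{p}F_{q}(a_{1},\ldots,a_{p};b_{1},\ldots,b_{q};\nu)=\sum_{k\ge0}\frac{(a_{1})_{k}\cdots(a_{p})_{k}}{(b_{1})_{k}\cdots(b_{q})_{k}}\frac{\nu^{k}}{k!}$ is the generalized hypergeometric function, with Pochhammer symbol $(\lambda)_{k}=\lambda(\lambda+1)\cdots(\lambda+k-1)$, $(\lambda)_0=1$. $B$ is a positive constant (the Mullins coefficient). *)

theory Defs
  imports "HOL-Analysis.Analysis"
begin

definition hyp1F3 :: "real \<Rightarrow> real \<Rightarrow> real \<Rightarrow> real \<Rightarrow> real \<Rightarrow> real" where
  "hyp1F3 a b1 b2 b3 v =
     (\<Sum>k. pochhammer a k / (pochhammer b1 k * pochhammer b2 k * pochhammer b3 k)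
            * v ^ k / fact k)"

definition z1 :: "real \<Rightarrow> real" where
  "z1 u = hyp1F3 (-1/4) (1/4) (1/2) (3/4) (u ^ 4 / 256)"

definition z2 :: "real \<Rightarrow> real" where
  "z2 u = u"

definition z3 :: "real \<Rightarrow> real" where
  "z3 u = u ^ 2 * hyp1F3 (1/4) (3/4) (5/4) (3/2) (u ^ 4 / 256)"

definition z4 :: "real \<Rightarrow> real" where
  "z4 u = u ^ 3 * hyp1F3 (1/2) (5/4) (3/2) (7/4) (u ^ 4 / 256)"

end

theory Submission
  imports Defs
begin

(* Substituting the self-similar ansatz into y_t + B y_xxxx = 0 shows that the profile Z solves
   the linear equation 4 Z'''' = u Z' - Z on D. Its power series solutions have coefficients
   satisfying a four-step recurrence; the four residue classes mod 4 give the entire solutions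
   z1, ..., z4, whose values and first three derivatives at 0 are linearly independent.
   An energy estimate and Gronwall's inequality show that a solution is determined by these four
   data at any single point, so the linear map from (C1, ..., C4) to the data of
   C1 z1 + ... + C4 z4 at a point of D is injective, hence onto, and Z coincides with the
   combination that matches its data there. *)

lemma gronwall_vanishing_right:
  fixes E E' :: "real \<Rightarrow> real"
  assumes "p \<le> q"
    and deriv: "\<And>x. p \<le> x \<Longrightarrow> x \<le> q \<Longrightarrow> (E has_real_derivative E' x) (at x)"
    and bound: "\<And>x. p \<le> x \<Longrightarrow> x \<le> q \<Longrightarrow> \<bar>E' x\<bar> \<le> K * E x"
    and "E p = 0" and "E q \<ge> 0"
  shows "E q = 0"
proof -
  define f where "f x = E x * exp (- K * x)" for x
  have "f q \<le> f p"
  proof (rule DERIV_nonpos_imp_nonincreasing[OF \<open>p \<le> q\<close>])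
    fix x assume x: "p \<le> x" "x \<le> q"
    have "(f has_real_derivative (E' x - K * E x) * exp (- K * x)) (at x)"
      unfolding f_def using deriv[OF x]
      by (auto intro!: derivative_eq_intros simp: algebra_simps)
    moreover have "E' x - K * E x \<le> 0"
      using bound[OF x] by linarith
    ultimately show "\<exists>y. (f has_real_derivative y) (at x) \<and> y \<le> 0"
      by (auto simp: mult_nonpos_nonneg)
  qed
  then show ?thesis
    using \<open>E p = 0\<close> \<open>E q \<ge> 0\<close> by (simp add: f_def mult_le_0_iff)
qed

lemma gronwall_vanishing:
  fixes E E' :: "real \<Rightarrow> real"
  assumes deriv: "\<And>x. x \<in> closed_segment p q \<Longrightarrow> (E has_real_derivative E' x) (at x)"
    and bound: "\<And>x. x \<in> closed_segment p q \<Longrightarrow> \<bar>E' x\<bar> \<le> K * E x"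
    and "E p = 0" and "E q \<ge> 0"
  shows "E q = 0"
proof (cases "p \<le> q")
  case True
  then show ?thesis
    using assms by (intro gronwall_vanishing_right[of p q E E' K]) (auto simp: closed_segment_eq_real_ivl)
next
  case False
  have "E (- (- q)) = 0"
  proof (rule gronwall_vanishing_right[of "- p" "- q" "\<lambda>x. E (- x)" "\<lambda>x. - E' (- x)" K])
    fix x assume x: "- p \<le> x" "x \<le> - q"
    then have seg: "- x \<in> closed_segment p q"
      using False by (auto simp: closed_segment_eq_real_ivl)
    show "((\<lambda>x. E (- x)) has_real_derivative - E' (- x)) (at x)"
      using DERIV_chain2[OF deriv[OF seg] DERIV_minus[OF DERIV_ident]] by simp
    show "\<bar>- E' (- x)\<bar> \<le> K * E (- x)"
      using bound[OF seg] by simp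
  qed (use False assms in auto)
  then show ?thesis by simp
qed

definition mullins_ode ::
    "(real \<Rightarrow> real) \<Rightarrow> (real \<Rightarrow> real) \<Rightarrow> (real \<Rightarrow> real) \<Rightarrow> (real \<Rightarrow> real) \<Rightarrow> real \<Rightarrow> bool" where
  "mullins_ode w0 w1 w2 w3 x \<longleftrightarrow>
     (w0 has_real_derivative w1 x) (at x) \<and> (w1 has_real_derivative w2 x) (at x) \<and>
     (w2 has_real_derivative w3 x) (at x) \<and> (w3 has_real_derivative (x * w1 x - w0 x) / 4) (at x)"

lemma mullins_energy_deriv_bound:
  fixes w0 w1 w2 w3 x :: real
  shows "\<bar>2 * (w0 * w1 + w1 * w2 + w2 * w3 + w3 * ((x * w1 - w0) / 4))\<bar>
           \<le> (2 + \<bar>x\<bar>) * (w0\<^sup>2 + w1\<^sup>2 + w2\<^sup>2 + w3\<^sup>2)"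
proof -
  have amgm: "\<bar>2 * a * b\<bar> \<le> a\<^sup>2 + b\<^sup>2" for a b :: real
    using sum_squares_bound[of "\<bar>a\<bar>" "\<bar>b\<bar>"] by (simp add: abs_mult)
  have "\<bar>x * (2 * w3 * w1)\<bar> \<le> \<bar>x\<bar> * (w3\<^sup>2 + w1\<^sup>2)"
    unfolding abs_mult[of x] by (intro mult_left_mono amgm) simp
  moreover have "0 \<le> \<bar>x\<bar> * w0\<^sup>2" "0 \<le> \<bar>x\<bar> * w2\<^sup>2" "0 \<le> w3\<^sup>2"
    by simp_all
  moreover have "2 * (w0 * w1 + w1 * w2 + w2 * w3 + w3 * ((x * w1 - w0) / 4))
      = 2 * w0 * w1 + 2 * w1 * w2 + 2 * w2 * w3 + x * (2 * w3 * w1) / 4 - 2 * w3 * w0 / 4"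
    by (simp add: field_simps)
  ultimately show ?thesis
    using amgm[of w0 w1] amgm[of w1 w2] amgm[of w2 w3] amgm[of w3 w0]
    by (simp only: abs_le_iff distrib_left distrib_right) linarith
qed

lemma mullins_ode_unique:
  assumes sys: "\<And>x. x \<in> closed_segment p q \<Longrightarrow> mullins_ode w0 w1 w2 w3 x"
    and "w0 p = 0" "w1 p = 0" "w2 p = 0" "w3 p = 0"
  shows "w0 q = 0 \<and> w1 q = 0 \<and> w2 q = 0 \<and> w3 q = 0"
proof -
  define E where "E x = (w0 x)\<^sup>2 + (w1 x)\<^sup>2 + (w2 x)\<^sup>2 + (w3 x)\<^sup>2" for x
  define E' where
    "E' x = 2 * (w0 x * w1 x + w1 x * w2 x + w2 x * w3 x + w3 x * ((x * w1 x - w0 x) / 4))" for x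
  have "E q = 0"
  proof (rule gronwall_vanishing[of p q E E' "2 + \<bar>p\<bar> + \<bar>q\<bar>"])
    fix x assume x: "x \<in> closed_segment p q"
    show "(E has_real_derivative E' x) (at x)"
      using sys[OF x] unfolding mullins_ode_def E_def E'_def
      by (auto intro!: derivative_eq_intros simp: algebra_simps)
    have "\<bar>x\<bar> \<le> \<bar>p\<bar> + \<bar>q\<bar>"
      using x by (auto simp: closed_segment_eq_real_ivl split: if_splits)
    then have "(2 + \<bar>x\<bar>) * E x \<le> (2 + \<bar>p\<bar> + \<bar>q\<bar>) * E x"
      by (intro mult_right_mono) (auto simp: E_def)
    then show "\<bar>E' x\<bar> \<le> (2 + \<bar>p\<bar> + \<bar>q\<bar>) * E x"
      using mullins_energy_deriv_bound[of "w0 x" "w1 x" "w2 x" "w3 x" x]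
      unfolding E_def E'_def by linarith
  qed (use assms in \<open>auto simp: E_def\<close>)
  then show ?thesis
    by (simp add: E_def add_nonneg_eq_0_iff)
qed

lemma summable_geometric_decay_step:
  fixes f :: "nat \<Rightarrow> real"
  assumes "0 < c" "c < 1" "0 < m"
    and decay: "\<And>n. N \<le> n \<Longrightarrow> \<bar>f (n + m)\<bar> \<le> c ^ m * \<bar>f n\<bar>"
  shows "summable f"
proof -
  define M where "M = (\<Sum>n<N + m. \<bar>f n\<bar> / c ^ n)"
  have bound: "\<bar>f n\<bar> \<le> M * c ^ n" for n
  proof (induction n rule: less_induct)
    case (less n)
    show ?case
    proof (cases "n < N + m")
      case True
      then have "\<bar>f n\<bar> / c ^ n \<le> M"
        unfolding M_def using \<open>0 < c\<close> by (intro member_le_sum) auto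
      then show ?thesis
        using \<open>0 < c\<close> by (simp add: divide_le_eq)
    next
      case False
      define k where "k = n - m"
      have n: "n = k + m" "N \<le> k"
        using False by (auto simp: k_def)
      have "\<bar>f n\<bar> \<le> c ^ m * \<bar>f k\<bar>"
        using decay n by simp
      also have "\<dots> \<le> c ^ m * (M * c ^ k)"
        using less[of k] n \<open>0 < m\<close> \<open>0 < c\<close> by (intro mult_left_mono) auto
      finally show ?thesis
        by (simp add: n power_add algebra_simps)
    qed
  qed
  show ?thesis
    by (rule summable_comparison_test'[of "\<lambda>n. M * c ^ n" 0])
       (use assms bound in \<open>auto intro!: summable_mult summable_geometric\<close>)
qed

(* Substituting the series of c_n u^n into 4 Z'''' = u Z' - Z gives
   4 (n+1)(n+2)(n+3)(n+4) c_(n+4) = (n-1) c_n. *)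
fun mullins_coeff :: "nat \<Rightarrow> nat \<Rightarrow> real" where
  "mullins_coeff j (Suc (Suc (Suc (Suc n)))) =
     (real n - 1) * mullins_coeff j n / (4 * (real n + 1) * (real n + 2) * (real n + 3) * (real n + 4))"
| "mullins_coeff j n = (if n = j then 1 else 0)"

lemma mullins_coeff_add4:
  "mullins_coeff j (n + 4) =
     (real n - 1) * mullins_coeff j n / (4 * (real n + 1) * (real n + 2) * (real n + 3) * (real n + 4))"
  by (simp add: numeral_eq_Suc)

lemma mullins_coeff_eq_0: "n mod 4 \<noteq> j mod 4 \<Longrightarrow> mullins_coeff j n = 0"
  by (induction j n rule: mullins_coeff.induct) auto

lemma mullins_coeff_summable: "summable (\<lambda>n. mullins_coeff j n * y ^ n)"
proof (rule summable_geometric_decay_step[of "1/2" 4 "nat \<lceil>y ^ 4\<rceil>"])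
  fix n assume "nat \<lceil>y ^ 4\<rceil> \<le> n"
  then have y: "y ^ 4 \<le> real n" by linarith
  define d where "d = 4 * (real n + 1) * (real n + 2) * (real n + 3) * (real n + 4)"
  have "real n * 4 \<le> (real n + 2) * ((real n + 3) * (real n + 4))"
    by (intro mult_mono) (auto simp: algebra_simps)
  then have "(real n + 1) * real n \<le> d / 16"
    unfolding d_def by (simp add: algebra_simps)
  moreover have "\<bar>real n - 1\<bar> * y ^ 4 \<le> (real n + 1) * real n"
    using y by (intro mult_mono) auto
  moreover have "d > 0"
    unfolding d_def by simp
  ultimately have ratio: "\<bar>real n - 1\<bar> * y ^ 4 / d \<le> (1/2) ^ 4"
    by (simp add: divide_le_eq power_divide)
  have "\<bar>mullins_coeff j (n + 4) * y ^ (n + 4)\<bar> =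
        \<bar>real n - 1\<bar> * y ^ 4 / d * \<bar>mullins_coeff j n * y ^ n\<bar>"
    unfolding mullins_coeff_add4 d_def by (simp add: abs_mult power_add)
  also have "\<dots> \<le> (1/2) ^ 4 * \<bar>mullins_coeff j n * y ^ n\<bar>"
    using ratio by (rule mult_right_mono) simp
  finally show "\<bar>mullins_coeff j (n + 4) * y ^ (n + 4)\<bar> \<le>
                (1/2) ^ 4 * \<bar>mullins_coeff j n * y ^ n\<bar>" .
qed simp_all

definition power_series :: "(nat \<Rightarrow> real) \<Rightarrow> real \<Rightarrow> real" where
  "power_series c x = (\<Sum>n. c n * x ^ n)"

lemma summable_diffs_iterate:
  fixes c :: "nat \<Rightarrow> real"
  assumes "\<And>y. summable (\<lambda>n. c n * y ^ n)"
  shows "summable (\<lambda>n. (diffs ^^ k) c n * y ^ n)"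
proof (induction k arbitrary: y)
  case 0
  then show ?case using assms by simp
next
  case (Suc k)
  then show ?case using termdiff_converges_all[of "(diffs ^^ k) c" y] by simp
qed

lemma power_series_has_real_derivative:
  assumes "\<And>y. summable (\<lambda>n. c n * y ^ n)"
  shows "(power_series c has_real_derivative power_series (diffs c) x) (at x)"
  unfolding power_series_def using termdiffs_strong_converges_everywhere[OF assms] .

lemma power_series_at_0 [simp]: "power_series c 0 = c 0"
  by (simp add: power_series_def)

lemma power_series_euler:
  assumes "\<And>y. summable (\<lambda>n. c n * y ^ n)"
  shows "(\<lambda>n. real n * c n * x ^ n) sums (x * power_series (diffs c) x)"
proof -
  have "(\<lambda>n. x * (diffs c n * x ^ n)) sums (x * power_series (diffs c) x)"
    unfolding power_series_def
    by (intro sums_mult summable_sums termdiff_converges_all assms)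
  moreover have "(\<lambda>n. x * (diffs c n * x ^ n)) = (\<lambda>n. real (Suc n) * c (Suc n) * x ^ Suc n)"
    by (auto simp: diffs_def algebra_simps)
  ultimately show ?thesis
    using sums_Suc_iff[of "\<lambda>n. real n * c n * x ^ n"] by simp
qed

lemma diffs_iterate_4:
  "(diffs ^^ 4) c n = (real n + 1) * (real n + 2) * (real n + 3) * (real n + 4) * c (n + 4)"
  by (simp add: diffs_def numeral_eq_Suc algebra_simps)

lemma mullins_coeff_diffs_iterate_4:
  "(diffs ^^ 4) (mullins_coeff j) n = (real n - 1) / 4 * mullins_coeff j n"
proof -
  have "(real n + 1) * (real n + 2) * (real n + 3) * (real n + 4) \<noteq> 0"
    by simp
  then show ?thesis
    unfolding diffs_iterate_4 mullins_coeff_add4 by (simp add: field_simps)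
qed

lemma power_series_mullins_coeff_ode:
  "power_series ((diffs ^^ 4) (mullins_coeff j)) x =
     (x * power_series (diffs (mullins_coeff j)) x - power_series (mullins_coeff j) x) / 4"
proof -
  have "(\<lambda>n. (real n * mullins_coeff j n * x ^ n - mullins_coeff j n * x ^ n) / 4) sums
          ((x * power_series (diffs (mullins_coeff j)) x - power_series (mullins_coeff j) x) / 4)"
    unfolding power_series_def
    by (intro sums_divide sums_diff power_series_euler[unfolded power_series_def]
          summable_sums mullins_coeff_summable)
  moreover have "(\<lambda>n. (real n * mullins_coeff j n * x ^ n - mullins_coeff j n * x ^ n) / 4) =
                 (\<lambda>n. (diffs ^^ 4) (mullins_coeff j) n * x ^ n)"
    by (simp add: mullins_coeff_diffs_iterate_4 field_simps)
  ultimately show ?thesis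
    unfolding power_series_def by (simp add: sums_iff)
qed

lemma mullins_coeff_self: "j < 4 \<Longrightarrow> mullins_coeff j j = 1"
  by (auto simp: numeral_eq_Suc less_Suc_eq)

lemma mullins_coeff_closed_form:
  fixes b1 b2 b3 :: real
  assumes "j < 4" and b_pos: "b1 > 0" "b2 > 0" "b3 > 0"
    and b: "\<And>k::nat. (b1 + k) * (b2 + k) * (b3 + k) * (k + 1) =
              ((j + 1) / 4 + k) * ((j + 2) / 4 + k) * ((j + 3) / 4 + k) * ((j + 4) / 4 + k)"
  shows "mullins_coeff j (4 * k + j) =
           pochhammer ((real j - 1) / 4) k / (pochhammer b1 k * pochhammer b2 k * pochhammer b3 k)
           / 256 ^ k / fact k"
proof (induction k)
  case 0
  then show ?case using mullins_coeff_self[OF \<open>j < 4\<close>] by simp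
next
  case (Suc k)
  define n where "n = 4 * k + j"
  have pos: "pochhammer b1 k > 0" "pochhammer b2 k > 0" "pochhammer b3 k > 0"
    "b1 + k > 0" "b2 + k > 0" "b3 + k > 0"
    using b_pos by (auto intro: pochhammer_pos)
  have "real n - 1 = 4 * ((real j - 1) / 4 + k)"
    by (simp add: n_def)
  moreover have "4 * (real n + 1) * (real n + 2) * (real n + 3) * (real n + 4) =
                 1024 * ((b1 + k) * (b2 + k) * (b3 + k) * (k + 1))"
    using b[of k] by (simp add: n_def field_simps)
  moreover have "4 * Suc k + j = n + 4"
    by (simp add: n_def)
  ultimately have "mullins_coeff j (4 * Suc k + j) =
      4 * ((real j - 1) / 4 + k) * mullins_coeff j n / (1024 * ((b1 + k) * (b2 + k) * (b3 + k) * (k + 1)))"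
    by (simp only: mullins_coeff_add4)
  also have "\<dots> = pochhammer ((real j - 1) / 4) (Suc k) /
      (pochhammer b1 (Suc k) * pochhammer b2 (Suc k) * pochhammer b3 (Suc k)) / 256 ^ Suc k / fact (Suc k)"
    unfolding Suc.IH[folded n_def] pochhammer_Suc fact_Suc power_Suc
    using pos by (simp add: divide_simps mult_ac) (simp add: algebra_simps)
  finally show ?case .
qed

lemma mullins_coeff_sums_residue_class:
  assumes "j < 4"
  shows "(\<lambda>k. mullins_coeff j (4 * k + j) * u ^ (4 * k + j)) sums power_series (mullins_coeff j) u"
proof (subst sums_mono_reindex)
  show "strict_mono (\<lambda>k. 4 * k + j)"
    by (rule strict_monoI) simp
  show "mullins_coeff j n * u ^ n = 0" if "n \<notin> range (\<lambda>k. 4 * k + j)" for n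
  proof -
    have "n mod 4 \<noteq> j"
    proof
      assume "n mod 4 = j"
      then have "n = 4 * (n div 4) + j"
        using div_mult_mod_eq[of n 4] by simp
      with that show False
        by blast
    qed
    then show ?thesis
      using \<open>j < 4\<close> by (simp add: mullins_coeff_eq_0)
  qed
  show "(\<lambda>n. mullins_coeff j n * u ^ n) sums power_series (mullins_coeff j) u"
    unfolding power_series_def by (intro summable_sums mullins_coeff_summable)
qed

lemma power_series_mullins_coeff_eq_hyp1F3:
  fixes b1 b2 b3 :: real
  assumes "j < 4" and "b1 > 0" "b2 > 0" "b3 > 0"
    and "\<And>k::nat. (b1 + k) * (b2 + k) * (b3 + k) * (k + 1) =
              ((j + 1) / 4 + k) * ((j + 2) / 4 + k) * ((j + 3) / 4 + k) * ((j + 4) / 4 + k)"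
  shows "power_series (mullins_coeff j) u = u ^ j * hyp1F3 ((real j - 1) / 4) b1 b2 b3 (u ^ 4 / 256)"
proof (cases "u ^ j = 0")
  case True
  then have "u = 0" "j \<noteq> 0"
    by auto
  then show ?thesis
    using \<open>j < 4\<close> by (simp add: mullins_coeff_eq_0)
next
  case False
  define t where "t k = pochhammer ((real j - 1) / 4) k / (pochhammer b1 k * pochhammer b2 k * pochhammer b3 k)
                          * (u ^ 4 / 256) ^ k / fact k" for k
  have "(\<lambda>k. mullins_coeff j (4 * k + j) * u ^ (4 * k + j)) = (\<lambda>k. u ^ j * t k)"
    unfolding mullins_coeff_closed_form[OF assms] t_def
    by (simp add: power_add power_divide mult_ac flip: power_mult)
  then have "(\<lambda>k. u ^ j * t k) sums power_series (mullins_coeff j) u"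
    using mullins_coeff_sums_residue_class[OF \<open>j < 4\<close>, of u] by simp
  then have "(\<lambda>k. u ^ j * t k / u ^ j) sums (power_series (mullins_coeff j) u / u ^ j)"
    by (rule sums_divide)
  then have "t sums (power_series (mullins_coeff j) u / u ^ j)"
    by (simp only: nonzero_mult_div_cancel_left[OF False])
  then show ?thesis
    using False unfolding hyp1F3_def t_def[symmetric] by (simp add: sums_iff)
qed

lemma hyp1F3_numerator_0: "hyp1F3 0 b1 b2 b3 v = 1"
proof -
  have "(\<lambda>k. pochhammer 0 k / (pochhammer b1 k * pochhammer b2 k * pochhammer b3 k) * v ^ k / fact k) =
        (\<lambda>k. if k = 0 then 1 else 0)"
    by (auto simp: pochhammer_0_left)
  then show ?thesis
    unfolding hyp1F3_def using sums_single[of 0 "\<lambda>_. 1 :: real"] by (simp add: sums_iff)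
qed

lemma z1_eq_power_series: "z1 u = power_series (mullins_coeff 0) u"
  using power_series_mullins_coeff_eq_hyp1F3[of 0 "1/4" "1/2" "3/4" u]
  by (simp add: z1_def field_simps)

lemma z2_eq_power_series: "z2 u = power_series (mullins_coeff 1) u"
  using power_series_mullins_coeff_eq_hyp1F3[of 1 "1/2" "3/4" "5/4" u]
  by (simp add: z2_def hyp1F3_numerator_0 field_simps)

lemma z3_eq_power_series: "z3 u = power_series (mullins_coeff 2) u"
  using power_series_mullins_coeff_eq_hyp1F3[of 2 "3/4" "5/4" "3/2" u]
  by (simp add: z3_def field_simps)

lemma z4_eq_power_series: "z4 u = power_series (mullins_coeff 3) u"
  using power_series_mullins_coeff_eq_hyp1F3[of 3 "5/4" "3/2" "7/4" u]
  by (simp add: z4_def field_simps)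

definition mullins_comb :: "real \<Rightarrow> real \<Rightarrow> real \<Rightarrow> real \<Rightarrow> nat \<Rightarrow> real \<Rightarrow> real" where
  "mullins_comb c0 c1 c2 c3 k u =
     c0 * power_series ((diffs ^^ k) (mullins_coeff 0)) u
     + c1 * power_series ((diffs ^^ k) (mullins_coeff 1)) u
     + c2 * power_series ((diffs ^^ k) (mullins_coeff 2)) u
     + c3 * power_series ((diffs ^^ k) (mullins_coeff 3)) u"

lemma mullins_comb_0: "mullins_comb c0 c1 c2 c3 0 u = c0 * z1 u + c1 * z2 u + c2 * z3 u + c3 * z4 u"
  by (simp add: mullins_comb_def z1_eq_power_series z2_eq_power_series z3_eq_power_series
      z4_eq_power_series)

lemma mullins_comb_at_0:
  "mullins_comb c0 c1 c2 c3 0 0 = c0" "mullins_comb c0 c1 c2 c3 1 0 = c1"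
  "mullins_comb c0 c1 c2 c3 2 0 = 2 * c2" "mullins_comb c0 c1 c2 c3 3 0 = 6 * c3"
  by (simp_all add: mullins_comb_def diffs_def numeral_eq_Suc)

lemma mullins_comb_has_real_derivative:
  "(mullins_comb c0 c1 c2 c3 k has_real_derivative mullins_comb c0 c1 c2 c3 (Suc k) x) (at x)"
proof -
  have "(power_series ((diffs ^^ k) (mullins_coeff j)) has_real_derivative
          power_series ((diffs ^^ Suc k) (mullins_coeff j)) x) (at x)" for j
    by (simp add: power_series_has_real_derivative summable_diffs_iterate mullins_coeff_summable)
  then show ?thesis
    unfolding mullins_comb_def[abs_def] by (auto intro!: derivative_eq_intros)
qed

lemma mullins_comb_ode:
  "mullins_ode (mullins_comb c0 c1 c2 c3 0) (mullins_comb c0 c1 c2 c3 1)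
     (mullins_comb c0 c1 c2 c3 2) (mullins_comb c0 c1 c2 c3 3) x"
proof -
  have ode: "mullins_comb c0 c1 c2 c3 4 x =
      (x * mullins_comb c0 c1 c2 c3 1 x - mullins_comb c0 c1 c2 c3 0 x) / 4"
    unfolding mullins_comb_def power_series_mullins_coeff_ode by (simp add: field_simps)
  show ?thesis
    using mullins_comb_has_real_derivative[of c0 c1 c2 c3 0 x]
      mullins_comb_has_real_derivative[of c0 c1 c2 c3 1 x]
      mullins_comb_has_real_derivative[of c0 c1 c2 c3 2 x]
      mullins_comb_has_real_derivative[of c0 c1 c2 c3 3 x]
    unfolding mullins_ode_def ode[symmetric] by (simp add: eval_nat_numeral)
qed

lemma mullins_ode_diff:
  assumes "mullins_ode f0 f1 f2 f3 x" "mullins_ode g0 g1 g2 g3 x"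
  shows "mullins_ode (\<lambda>x. f0 x - g0 x) (\<lambda>x. f1 x - g1 x) (\<lambda>x. f2 x - g2 x) (\<lambda>x. f3 x - g3 x) x"
  using assms unfolding mullins_ode_def
  by (auto intro!: derivative_eq_intros simp: algebra_simps diff_divide_distrib)

lemma mullins_comb_initial_values:
  "\<exists>c0 c1 c2 c3. mullins_comb c0 c1 c2 c3 0 p = v0 \<and> mullins_comb c0 c1 c2 c3 1 p = v1 \<and>
                 mullins_comb c0 c1 c2 c3 2 p = v2 \<and> mullins_comb c0 c1 c2 c3 3 p = v3"
proof -
  define L :: "real \<times> real \<times> real \<times> real \<Rightarrow> real \<times> real \<times> real \<times> real" where
    "L = (\<lambda>(c0, c1, c2, c3). (mullins_comb c0 c1 c2 c3 0 p, mullins_comb c0 c1 c2 c3 1 p,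
                              mullins_comb c0 c1 c2 c3 2 p, mullins_comb c0 c1 c2 c3 3 p))"
  have "linear L"
    by (rule linearI) (auto simp: L_def mullins_comb_def algebra_simps)
  moreover have "inj L"
    unfolding linear_injective_0[OF \<open>linear L\<close>]
  proof (intro allI impI)
    fix c :: "real \<times> real \<times> real \<times> real"
    assume "L c = 0"
    obtain c0 c1 c2 c3 where c: "c = (c0, c1, c2, c3)"
      by (cases c) auto
    \<comment> \<open>zero data at \<open>p\<close> propagate to \<open>0\<close>, where the data are the coefficients\<close>
    have "mullins_comb c0 c1 c2 c3 0 0 = 0 \<and> mullins_comb c0 c1 c2 c3 1 0 = 0 \<and>
          mullins_comb c0 c1 c2 c3 2 0 = 0 \<and> mullins_comb c0 c1 c2 c3 3 0 = 0"
      using \<open>L c = 0\<close> mullins_comb_ode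
      by (intro mullins_ode_unique[of p 0 "mullins_comb c0 c1 c2 c3 0" "mullins_comb c0 c1 c2 c3 1"
            "mullins_comb c0 c1 c2 c3 2" "mullins_comb c0 c1 c2 c3 3"])
        (auto simp: L_def c zero_prod_def)
    then show "c = 0"
      by (simp add: c zero_prod_def mullins_comb_at_0 del: One_nat_def)
  qed
  ultimately have "surj L"
    by (intro linear_injective_imp_surjective) auto
  then obtain c where "L c = (v0, v1, v2, v3)"
    by (metis surjD)
  then show ?thesis
    by (cases c) (auto simp: L_def)
qed

lemma mullins_ode_solution_eq_comb:
  assumes "convex D" and sol: "\<And>x. x \<in> D \<Longrightarrow> mullins_ode w0 w1 w2 w3 x"
  shows "\<exists>c0 c1 c2 c3. \<forall>x\<in>D. w0 x = c0 * z1 x + c1 * z2 x + c2 * z3 x + c3 * z4 x"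
proof (cases "D = {}")
  case False
  then obtain p where "p \<in> D"
    by blast
  obtain c0 c1 c2 c3 where c:
    "mullins_comb c0 c1 c2 c3 0 p = w0 p" "mullins_comb c0 c1 c2 c3 1 p = w1 p"
    "mullins_comb c0 c1 c2 c3 2 p = w2 p" "mullins_comb c0 c1 c2 c3 3 p = w3 p"
    using mullins_comb_initial_values[of p "w0 p" "w1 p" "w2 p" "w3 p"] by blast
  have "w0 x = mullins_comb c0 c1 c2 c3 0 x" if "x \<in> D" for x
  proof -
    have "closed_segment p x \<subseteq> D"
      using \<open>convex D\<close> \<open>p \<in> D\<close> \<open>x \<in> D\<close> by (simp add: convex_contains_segment)
    then have "mullins_ode (\<lambda>y. w0 y - mullins_comb c0 c1 c2 c3 0 y)
                 (\<lambda>y. w1 y - mullins_comb c0 c1 c2 c3 1 y) (\<lambda>y. w2 y - mullins_comb c0 c1 c2 c3 2 y)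
                 (\<lambda>y. w3 y - mullins_comb c0 c1 c2 c3 3 y) y"
      if "y \<in> closed_segment p x" for y
      using that by (intro mullins_ode_diff sol mullins_comb_ode) blast
    from mullins_ode_unique[OF this] show ?thesis
      using c by simp
  qed
  then show ?thesis
    by (intro exI[of _ c0] exI[of _ c1] exI[of _ c2] exI[of _ c3]) (simp add: mullins_comb_0)
qed simp

lemma self_similar_has_real_derivative_time:
  fixes B t x :: real
  defines "\<xi> \<equiv> x / (B * t) powr (1/4)"
  assumes "B > 0" "t > 0" and "(Z has_real_derivative Z') (at \<xi>)"
  shows "((\<lambda>s. (B * s) powr (1/4) * Z (x / (B * s) powr (1/4))) has_real_derivative
           B / 4 * (B * t) powr (- 3/4) * (Z \<xi> - \<xi> * Z')) (at t)"
proof -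
  define S where "S s = (B * s) powr (1/4)" for s
  define S' where "S' = B / 4 * (B * t) powr (- 3/4)"
  have "S t > 0"
    using assms by (simp add: S_def)
  have dS: "(S has_real_derivative S') (at t)"
    unfolding S_def[abs_def] S'_def using assms
    by (auto intro!: derivative_eq_intros simp: powr_diff field_simps)
  have "((\<lambda>s. S s * Z (x / S s)) has_real_derivative
          S' * Z (x / S t) + S t * (Z' * (- x * S' / (S t)\<^sup>2))) (at t)"
    using dS assms \<open>S t > 0\<close> unfolding \<xi>_def S_def[symmetric]
    by (auto intro!: derivative_eq_intros DERIV_chain2[of Z] simp: power2_eq_square)
  moreover have "S' * Z (x / S t) + S t * (Z' * (- x * S' / (S t)\<^sup>2)) = S' * (Z \<xi> - \<xi> * Z')"
    using \<open>S t > 0\<close> by (simp add: \<xi>_def S_def[symmetric] power2_eq_square field_simps)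
  ultimately have "((\<lambda>s. S s * Z (x / S s)) has_real_derivative S' * (Z \<xi> - \<xi> * Z')) (at t)"
    by (simp only:)
  then show ?thesis
    unfolding S_def S'_def by (simp add: mult.assoc)
qed

lemma self_similar_profile_equation:
  fixes B x yt Z1 Z4 :: real
  assumes "B > 0"
    and dt: "((\<lambda>s. y s x) has_real_derivative yt) (at (1 / B))"
    and dZ: "(Z has_real_derivative Z1) (at x)"
    and selfsim: "\<And>s. s > 0 \<Longrightarrow> y s x = (B * s) powr (1/4) * Z (x / (B * s) powr (1/4))"
    and pde: "yt + B * Z4 = 0"
  shows "(x * Z1 - Z x) / 4 = Z4"
proof -
  have "((\<lambda>s. (B * s) powr (1/4) * Z (x / (B * s) powr (1/4))) has_real_derivative
          B / 4 * (Z x - x * Z1)) (at (1 / B))"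
    using self_similar_has_real_derivative_time[of B "1 / B" Z Z1 x] \<open>B > 0\<close> dZ by simp
  then have "((\<lambda>s. y s x) has_real_derivative B / 4 * (Z x - x * Z1)) (at (1 / B))"
    by (rule has_field_derivative_transform_within_open[of _ _ _ "{0<..}"])
      (use \<open>B > 0\<close> selfsim in auto)
  then have "yt = B / 4 * (Z x - x * Z1)"
    using dt by (rule DERIV_unique[symmetric])
  then have "B * (Z x - x * Z1 + 4 * Z4) = 0"
    using pde by (simp add: algebra_simps)
  then show ?thesis
    using \<open>B > 0\<close> by simp
qed

theorem theorem2:
  fixes B :: real and y :: "real \<Rightarrow> real \<Rightarrow> real" and Z :: "real \<Rightarrow> real"
    and D :: "real set"
    and yt y1 y2 y3 y4 :: "real \<Rightarrow> real \<Rightarrow> real"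
  assumes B: "B > 0"
    and D: "D = {0<..} \<or> D = {..<0}"
    and dt: "\<And>t x. t > 0 \<Longrightarrow> x \<in> D \<Longrightarrow> ((\<lambda>s. y s x) has_real_derivative yt t x) (at t)"
    and dx1: "\<And>t x. t > 0 \<Longrightarrow> x \<in> D \<Longrightarrow> ((\<lambda>w. y t w) has_real_derivative y1 t x) (at x)"
    and dx2: "\<And>t x. t > 0 \<Longrightarrow> x \<in> D \<Longrightarrow> ((\<lambda>w. y1 t w) has_real_derivative y2 t x) (at x)"
    and dx3: "\<And>t x. t > 0 \<Longrightarrow> x \<in> D \<Longrightarrow> ((\<lambda>w. y2 t w) has_real_derivative y3 t x) (at x)"
    and dx4: "\<And>t x. t > 0 \<Longrightarrow> x \<in> D \<Longrightarrow> ((\<lambda>w. y3 t w) has_real_derivative y4 t x) (at x)"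
    and pde: "\<And>t x. t > 0 \<Longrightarrow> x \<in> D \<Longrightarrow> yt t x + B * y4 t x = 0"
    and selfsim: "\<And>t x. t > 0 \<Longrightarrow> x \<in> D \<Longrightarrow>
                    y t x = (B * t) powr (1/4) * Z (x / (B * t) powr (1/4))"
  shows "\<exists>C1 C2 C3 C4 :: real. \<forall>t x. t > 0 \<longrightarrow> x \<in> D \<longrightarrow>
           y t x = (B * t) powr (1/4) *
             (C1 * z1 (x / (B * t) powr (1/4)) + C2 * z2 (x / (B * t) powr (1/4))
              + C3 * z3 (x / (B * t) powr (1/4)) + C4 * z4 (x / (B * t) powr (1/4)))"
proof -
  have t0: "1 / B > 0" "B * (1 / B) = 1"
    using B by auto
  have "open D" "convex D"
    using D by (auto simp: convex_halfspace_gt convex_halfspace_lt)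
  have profile: "y (1 / B) x = Z x" if "x \<in> D" for x
    using selfsim[OF t0(1) that] t0(2) by simp
  have dZ: "(Z has_real_derivative y1 (1 / B) x) (at x)" if "x \<in> D" for x
    using dx1[OF t0(1) that] \<open>open D\<close> that profile by (rule has_field_derivative_transform_within_open)
  have "mullins_ode Z (y1 (1 / B)) (y2 (1 / B)) (y3 (1 / B)) x" if x: "x \<in> D" for x
  proof -
    have "(x * y1 (1 / B) x - Z x) / 4 = y4 (1 / B) x"
      by (rule self_similar_profile_equation[where y = y, OF B dt dZ selfsim pde]) (use t0 x in auto)
    then show ?thesis
      unfolding mullins_ode_def using dZ[OF x] dx2[OF t0(1) x] dx3[OF t0(1) x] dx4[OF t0(1) x] by simp
  qed
  then obtain C1 C2 C3 C4 where C: "\<forall>u\<in>D. Z u = C1 * z1 u + C2 * z2 u + C3 * z3 u + C4 * z4 u"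
    using mullins_ode_solution_eq_comb[OF \<open>convex D\<close>] by blast
  have "x / (B * t) powr (1/4) \<in> D" if "t > 0" "x \<in> D" for t x
    using D that B by (auto simp: divide_pos_pos divide_neg_pos)
  then show ?thesis
    using selfsim C by (intro exI[of _ C1] exI[of _ C2] exI[of _ C3] exI[of _ C4]) simp
qed

end
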